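(* Let $T,S\in\mathcal{B}_A(\mathcal{H})$. Then $$\omega_A(TS)\le \tfrac12\Big(\omega_A(ST)+\|T\|_A\|S\|_A\Big).$$
   Context: $\mathcal{H}$ is a complex Hilbert space with inner product $\langle\cdot,\cdot\rangle$, and $A$ is a fixed nonzero positive bounded operator on $\mathcal{H}$. Set $\langle x,y\rangle_A=\langle Ax,y\rangle$ and $\|x\|_A=\|A^{1/2}x\|$. $\mathcal{B}_A(\mathcal{H})$ is the set of bounded operators $T$ for which there exists a bounded $S$ with $\langle Tx,y\rangle_A=\langle x,Sy\rangle_A$ for all $x,y$. For an operator $T$ with $\|Tx\|_A\le\lambda\|x\|_A$ for some $\lambda>0$ and all $x$, $\|T\|_A=\sup\{\|Tx\|_A: \|x\|_A=1\}$, and $\omega_A(T)=\sup\{|\langle Tx,x\rangle_A|:\|x\|_A=1\}$. *)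

theory Defs
  imports Complex_Main
begin

text \<open>A complex Hilbert space is modelled on a type 'a (an abelian group) together with
  a complex scalar multiplication sc and an inner product ip (linear in the first argument,
  conjugate symmetric, positive definite), complete for the induced norm.\<close>

definition hnorm :: "('a \<Rightarrow> 'a \<Rightarrow> complex) \<Rightarrow> 'a \<Rightarrow> real" where
  "hnorm ip x = sqrt (Re (ip x x))"

definition complex_hilbert_space ::
  "(complex \<Rightarrow> 'a::ab_group_add \<Rightarrow> 'a) \<Rightarrow> ('a \<Rightarrow> 'a \<Rightarrow> complex) \<Rightarrow> bool" where
  "complex_hilbert_space sc ip \<longleftrightarrow>
     (\<forall>x. sc 1 x = x) \<and>
     (\<forall>a b x. sc a (sc b x) = sc (a * b) x) \<and>
     (\<forall>a b x. sc (a + b) x = sc a x + sc b x) \<and>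
     (\<forall>a x y. sc a (x + y) = sc a x + sc a y) \<and>
     (\<forall>x y z. ip (x + y) z = ip x z + ip y z) \<and>
     (\<forall>a x y. ip (sc a x) y = a * ip x y) \<and>
     (\<forall>x y. ip y x = cnj (ip x y)) \<and>
     (\<forall>x. Im (ip x x) = 0 \<and> Re (ip x x) \<ge> 0) \<and>
     (\<forall>x. ip x x = 0 \<longrightarrow> x = 0) \<and>
     (\<forall>f :: nat \<Rightarrow> 'a.
        (\<forall>e>0. \<exists>N. \<forall>m\<ge>N. \<forall>n\<ge>N. hnorm ip (f m - f n) < e) \<longrightarrow>
        (\<exists>l. \<forall>e>0. \<exists>N. \<forall>n\<ge>N. hnorm ip (f n - l) < e))"

definition bounded_op ::
  "(complex \<Rightarrow> 'a::ab_group_add \<Rightarrow> 'a) \<Rightarrow> ('a \<Rightarrow> 'a \<Rightarrow> complex) \<Rightarrow> ('a \<Rightarrow> 'a) \<Rightarrow> bool" where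
  "bounded_op sc ip T \<longleftrightarrow>
     (\<forall>x y. T (x + y) = T x + T y) \<and> (\<forall>a x. T (sc a x) = sc a (T x)) \<and>
     (\<exists>C. \<forall>x. hnorm ip (T x) \<le> C * hnorm ip x)"

definition positive_op ::
  "(complex \<Rightarrow> 'a::ab_group_add \<Rightarrow> 'a) \<Rightarrow> ('a \<Rightarrow> 'a \<Rightarrow> complex) \<Rightarrow> ('a \<Rightarrow> 'a) \<Rightarrow> bool" where
  "positive_op sc ip A \<longleftrightarrow> bounded_op sc ip A \<and>
     (\<forall>x. Im (ip (A x) x) = 0 \<and> Re (ip (A x) x) \<ge> 0)"

text \<open>\<open>\<langle>x,y\<rangle>_A = \<langle>Ax,y\<rangle>\<close> and \<open>\<parallel>x\<parallel>_A = \<parallel>A^{1/2}x\<parallel> = sqrt \<langle>Ax,x\<rangle>\<close>.\<close>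
definition A_ip :: "('a \<Rightarrow> 'a \<Rightarrow> complex) \<Rightarrow> ('a \<Rightarrow> 'a) \<Rightarrow> 'a \<Rightarrow> 'a \<Rightarrow> complex" where
  "A_ip ip A x y = ip (A x) y"

definition A_norm :: "('a \<Rightarrow> 'a \<Rightarrow> complex) \<Rightarrow> ('a \<Rightarrow> 'a) \<Rightarrow> 'a \<Rightarrow> real" where
  "A_norm ip A x = sqrt (Re (ip (A x) x))"

definition BA ::
  "(complex \<Rightarrow> 'a::ab_group_add \<Rightarrow> 'a) \<Rightarrow> ('a \<Rightarrow> 'a \<Rightarrow> complex) \<Rightarrow> ('a \<Rightarrow> 'a) \<Rightarrow> ('a \<Rightarrow> 'a) set" where
  "BA sc ip A = {T. bounded_op sc ip T \<and>
     (\<exists>S. bounded_op sc ip S \<and> (\<forall>x y. A_ip ip A (T x) y = A_ip ip A x (S y)))}"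

definition A_opnorm :: "('a \<Rightarrow> 'a \<Rightarrow> complex) \<Rightarrow> ('a \<Rightarrow> 'a) \<Rightarrow> ('a \<Rightarrow> 'a) \<Rightarrow> real" where
  "A_opnorm ip A T = Sup {A_norm ip A (T x) | x. A_norm ip A x = 1}"

definition A_numrad :: "('a \<Rightarrow> 'a \<Rightarrow> complex) \<Rightarrow> ('a \<Rightarrow> 'a) \<Rightarrow> ('a \<Rightarrow> 'a) \<Rightarrow> real" where
  "A_numrad ip A T = Sup {cmod (A_ip ip A (T x) x) | x. A_norm ip A x = 1}"

end

theory Submission
  imports Defs
begin

(* All the work happens in the semi-inner product space given by <x,y>_A = <Ax,y>. For a unit
   vector x put v = S x and let S' be an A-adjoint of S, so that <x, S' v> = |v|^2 and
   <T v, S' v> = <S T v, v>. Buzano's inequality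
     |<a,e><e,b>| <= (|a| |b| + |<a,b>|) / 2    for |e| = 1,
   applied to a = T v, e = x, b = S' v, then gives
     |<T S x, x>| |v|^2 <= (|T| |S| + w(S T)) |v|^2 / 2,
   using |S' v| <= |S| |v|, which holds because |S' v|^2 = <S S' v, v>. *)

locale semi_inner_product =
  fixes sc :: "complex \<Rightarrow> 'a::ab_group_add \<Rightarrow> 'a" and f :: "'a \<Rightarrow> 'a \<Rightarrow> complex"
  assumes add_left: "f (x + y) z = f x z + f y z"
    and scale_left: "f (sc a x) y = a * f x y"
    and conj_sym: "f y x = cnj (f x y)"
    and Im_diag: "Im (f x x) = 0"
    and Re_diag_nonneg: "Re (f x x) \<ge> 0"
begin

abbreviation nrm :: "'a \<Rightarrow> real" where
  "nrm x \<equiv> sqrt (Re (f x x))"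

lemma zero_left [simp]: "f 0 y = 0"
  using add_left[of 0 0 y] by simp

lemma minus_left: "f (- x) y = - f x y"
  using add_left[of x "- x" y] by (simp add: add_eq_0_iff)

lemma diff_left: "f (x - y) z = f x z - f y z"
  using add_left[of x "- y" z] minus_left[of y z] by simp

lemma add_right: "f x (y + z) = f x y + f x z"
proof -
  have "f x (y + z) = cnj (f y x + f z x)"
    unfolding add_left[symmetric] by (rule conj_sym)
  also have "\<dots> = f x y + f x z"
    by (simp only: complex_cnj_add conj_sym[symmetric])
  finally show ?thesis .
qed

lemma diff_right: "f x (y - z) = f x y - f x z"
  by (metis diff_left conj_sym complex_cnj_diff)

lemma scale_right: "f x (sc a y) = cnj a * f x y"
  by (metis scale_left conj_sym complex_cnj_mult)

lemma diag_eq_nrm_sq: "f x x = complex_of_real (nrm x ^ 2)"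
  using Im_diag[of x] Re_diag_nonneg[of x] by (simp add: complex_eq_iff)

lemma nrm_nonneg: "nrm x \<ge> 0"
  using Re_diag_nonneg by simp

lemma cauchy_schwarz: "cmod (f x y) \<le> nrm x * nrm y"
proof -
  define c where "c = f x y"
  define a where "a = Re (f x x)"
  define q where "q = Re (f y y)"
  define b where "b = (cmod c)\<^sup>2"
  have "a \<ge> 0" "q \<ge> 0"
    using Re_diag_nonneg a_def q_def by auto
  have quadratic_nonneg: "0 \<le> a - 2 * s * b + s\<^sup>2 * b * q" for s :: real
  proof -
    have "f y x = cnj c" "f x x = complex_of_real a" "f y y = complex_of_real q"
      using conj_sym[of x y] Im_diag[of x] Im_diag[of y]
      by (simp_all add: c_def a_def q_def complex_eq_iff)
    moreover have "c * cnj c = complex_of_real b"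
      unfolding b_def by (rule complex_norm_square[symmetric])
    ultimately have "f (x - sc (of_real s * c) y) (x - sc (of_real s * c) y)
        = complex_of_real (a - 2 * s * b + s\<^sup>2 * b * q)"
      by (simp add: diff_left diff_right scale_left scale_right c_def algebra_simps power2_eq_square)
    then show ?thesis
      using Re_diag_nonneg[of "x - sc (of_real s * c) y"] by simp
  qed
  have "b \<le> a * q"
  proof (cases "q > 0")
    case True
    then show ?thesis
      using quadratic_nonneg[of "1 / q"] by (simp add: field_simps power2_eq_square)
  next
    case False
    with \<open>q \<ge> 0\<close> have "q = 0" by simp
    \<comment> \<open>the quadratic degenerates to \<open>a - 2 s b\<close>, bounded below only if \<open>b = 0\<close>\<close>
    then show ?thesis
      using quadratic_nonneg[of "(a + 1) / b"] \<open>a \<ge> 0\<close> by (cases "b = 0") (simp_all add: b_def)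
  qed
  then have "(cmod c)\<^sup>2 \<le> (nrm x * nrm y)\<^sup>2"
    using \<open>a \<ge> 0\<close> \<open>q \<ge> 0\<close> by (simp add: b_def a_def q_def power_mult_distrib)
  then show ?thesis
    unfolding c_def by (rule power2_le_imp_le) (intro mult_nonneg_nonneg nrm_nonneg)
qed

lemma nrm_scale: "nrm (sc c x) = cmod c * nrm x"
proof -
  have "f (sc c x) (sc c x) = (c * cnj c) * f x x"
    by (simp add: scale_left scale_right)
  also have "c * cnj c = complex_of_real ((cmod c)\<^sup>2)"
    by (rule complex_norm_square[symmetric])
  finally have "Re (f (sc c x) (sc c x)) = (cmod c)\<^sup>2 * Re (f x x)"
    by simp
  then show ?thesis
    by (simp add: real_sqrt_mult)
qed

lemma nrm_normalize:
  assumes "nrm x \<noteq> 0"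
  shows "nrm (sc (of_real (1 / nrm x)) x) = 1"
  using assms nrm_nonneg[of x] by (simp add: nrm_scale norm_divide)

text \<open>Reflecting \<open>b\<close> in the line through the unit vector \<open>e\<close>, \<open>c = 2 f b e \<cdot> e - b\<close>,
  preserves its norm and gives \<open>2 f a e f e b = f a b + f a c\<close>.\<close>
lemma buzano:
  assumes "nrm e = 1"
  shows "cmod (f a e * f e b) \<le> (nrm a * nrm b + cmod (f a b)) / 2"
proof -
  define k where "k = 2 * f b e"
  define c where "c = sc k e - b"
  have "f e e = 1"
    using diag_eq_nrm_sq[of e] assms by simp
  then have "f c c = f b b"
    using conj_sym[of b e]
    by (simp add: c_def k_def diff_left diff_right scale_left scale_right algebra_simps)
  moreover have "2 * (f a e * f e b) = f a b + f a c"
    using conj_sym[of e b] by (simp add: c_def k_def diff_right scale_right algebra_simps)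
  then have "2 * cmod (f a e * f e b) \<le> cmod (f a b) + cmod (f a c)"
    by (metis norm_mult norm_numeral norm_triangle_ineq)
  ultimately show ?thesis
    using cauchy_schwarz[of a c] by simp
qed

lemma homogeneous_norm_bound:
  assumes hom: "\<And>a x. X (sc a x) = sc a (X x)"
    and unit: "\<And>x. nrm x = 1 \<Longrightarrow> nrm (X x) \<le> K"
    and null: "\<And>x. nrm x = 0 \<Longrightarrow> nrm (X x) = 0"
  shows "nrm (X x) \<le> K * nrm x"
proof (cases "nrm x = 0")
  case False
  then have "nrm x > 0"
    using nrm_nonneg[of x] by linarith
  have "nrm (X (sc (of_real (1 / nrm x)) x)) \<le> K"
    using unit nrm_normalize[OF False] by blast
  with \<open>nrm x > 0\<close> show ?thesis
    by (simp add: hom nrm_scale norm_divide pos_divide_le_eq)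
qed (simp add: null)

lemma homogeneous_quadratic_bound:
  assumes hom: "\<And>a x. X (sc a x) = sc a (X x)"
    and unit: "\<And>x. nrm x = 1 \<Longrightarrow> cmod (f (X x) x) \<le> K"
    and null: "\<And>x. nrm x = 0 \<Longrightarrow> f (X x) x = 0"
  shows "cmod (f (X x) x) \<le> K * nrm x ^ 2"
proof (cases "nrm x = 0")
  case False
  define r where "r = nrm x"
  then have "r > 0"
    using False nrm_nonneg[of x] by linarith
  define c where "c = complex_of_real (1 / r)"
  have "f (X (sc c x)) (sc c x) = complex_of_real (1 / r ^ 2) * f (X x) x"
    by (simp add: c_def hom scale_left scale_right power2_eq_square)
  moreover have "cmod (f (X (sc c x)) (sc c x)) \<le> K"
    using unit nrm_normalize[OF False] c_def r_def by blast
  ultimately have "cmod (f (X x) x) / r ^ 2 \<le> K"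
    using \<open>r > 0\<close> by (simp add: norm_divide norm_power)
  with \<open>r > 0\<close> show ?thesis
    by (simp add: r_def pos_divide_le_eq)
qed (simp add: null)

lemma adjoint_sym:
  assumes "\<And>x y. f (T x) y = f x (T' y)"
  shows "f (T' x) y = f x (T y)"
  by (metis assms conj_sym)

lemma adjoint_comp_selfadjoint:
  assumes "\<And>x y. f (T x) y = f x (T' y)"
  shows "f ((T' \<circ> T) x) y = f x ((T' \<circ> T) y)"
  using assms adjoint_sym[OF assms] by simp

lemma adjoint_norm_sq:
  assumes "\<And>x y. f (T x) y = f x (T' y)"
  shows "nrm (T x) ^ 2 \<le> nrm x * nrm (T' (T x))"
proof -
  have "nrm (T x) ^ 2 = Re (f (T x) (T x))"
    using Re_diag_nonneg by simp
  also have "\<dots> = Re (f x (T' (T x)))"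
    by (simp add: assms)
  also have "\<dots> \<le> nrm x * nrm (T' (T x))"
    using complex_Re_le_cmod cauchy_schwarz order_trans by blast
  finally show ?thesis .
qed

lemma adjoint_norm_le:
  assumes adj: "\<And>x y. f (T x) y = f x (T' y)"
    and bound: "\<And>x. nrm (T x) \<le> K * nrm x" and "K \<ge> 0"
  shows "nrm (T' x) \<le> K * nrm x"
proof -
  have "nrm (T' x) ^ 2 \<le> nrm x * nrm (T (T' x))"
    using adjoint_norm_sq adjoint_sym[OF adj] by blast
  also have "\<dots> \<le> nrm x * (K * nrm (T' x))"
    by (rule mult_left_mono[OF bound nrm_nonneg])
  finally have le: "nrm (T' x) * nrm (T' x) \<le> (K * nrm x) * nrm (T' x)"
    by (simp add: power2_eq_square algebra_simps)
  show ?thesis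
  proof (cases "nrm (T' x) = 0")
    case True
    then show ?thesis
      using \<open>K \<ge> 0\<close> nrm_nonneg[of x] by simp
  next
    case False
    then have "nrm (T' x) > 0"
      using nrm_nonneg[of "T' x"] by linarith
    with le show ?thesis
      by (rule mult_right_le_imp_le)
  qed
qed

lemma selfadjoint_funpow:
  assumes "\<And>x y. f (R x) y = f x (R y)"
  shows "f ((R ^^ m) x) y = f x ((R ^^ m) y)"
proof (induction m arbitrary: x y)
  case (Suc m)
  have "f ((R ^^ Suc m) x) y = f ((R ^^ m) x) (R y)"
    by (simp add: assms)
  also have "\<dots> = f x ((R ^^ m) (R y))"
    by (rule Suc)
  finally show ?case
    by (simp add: funpow_swap1)
qed simp

lemma selfadjoint_norm_pow2:
  assumes sa: "\<And>x y. f (R x) y = f x (R y)" and "nrm x = 1"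
  shows "nrm (R x) ^ 2 ^ n \<le> nrm ((R ^^ 2 ^ n) x)"
proof (induction n)
  case (Suc n)
  define Q where "Q = R ^^ 2 ^ n"
  have "nrm (R x) ^ 2 ^ Suc n = (nrm (R x) ^ 2 ^ n)\<^sup>2"
    by (simp add: power_mult[symmetric] mult.commute)
  also have "\<dots> \<le> nrm (Q x) ^ 2"
    unfolding Q_def by (rule power_mono[OF Suc]) (intro zero_le_power nrm_nonneg)
  also have "\<dots> \<le> nrm x * nrm (Q (Q x))"
    unfolding Q_def by (rule adjoint_norm_sq) (rule selfadjoint_funpow[OF sa])
  also have "Q (Q x) = (R ^^ 2 ^ Suc n) x"
    by (simp add: Q_def funpow_add mult_2)
  finally show ?case
    using \<open>nrm x = 1\<close> by simp
qed simp

lemma selfadjoint_norm_le_growth_rate: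
  assumes sa: "\<And>x y. f (R x) y = f x (R y)" and "nrm x = 1" and "K > 0"
    and growth: "\<And>m. nrm ((R ^^ m) x) \<le> C * K ^ m"
  shows "nrm (R x) \<le> K"
proof (rule ccontr)
  assume "\<not> nrm (R x) \<le> K"
  then have "nrm (R x) / K > 1"
    using \<open>K > 0\<close> by simp
  then obtain n where "C < (nrm (R x) / K) ^ n"
    using real_arch_pow by blast
  also have "\<dots> \<le> (nrm (R x) / K) ^ 2 ^ n"
    using \<open>nrm (R x) / K > 1\<close> by (intro power_increasing) (simp_all add: less_imp_le)
  also have "\<dots> \<le> C"
  proof -
    have "nrm (R x) ^ 2 ^ n \<le> C * K ^ 2 ^ n"
      using selfadjoint_norm_pow2[OF sa \<open>nrm x = 1\<close>] growth order_trans by blast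
    then have "nrm (R x) ^ 2 ^ n / K ^ 2 ^ n \<le> C"
      using \<open>K > 0\<close> by (simp add: pos_divide_le_eq)
    then show ?thesis
      by (simp only: power_divide)
  qed
  finally show False
    by simp
qed

lemma funpow_norm_le:
  assumes "\<And>x. nrm (R x) \<le> K * nrm x" and "K \<ge> 0"
  shows "nrm ((R ^^ m) x) \<le> K ^ m * nrm x"
proof (induction m)
  case (Suc m)
  have "nrm ((R ^^ Suc m) x) \<le> K * nrm ((R ^^ m) x)"
    using assms(1) by simp
  also have "\<dots> \<le> K * (K ^ m * nrm x)"
    using Suc \<open>K \<ge> 0\<close> by (simp add: mult_left_mono)
  finally show ?case
    by (simp add: mult.assoc)
qed simp

lemma norm_le_sqrt_adjoint_comp_bound:
  assumes hom: "\<And>a x. T (sc a x) = sc a (T x)" and adj: "\<And>x y. f (T x) y = f x (T' y)"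
    and unit: "\<And>x. nrm x = 1 \<Longrightarrow> nrm (T' (T x)) \<le> K"
  shows "nrm (T x) \<le> sqrt K * nrm x"
proof (rule homogeneous_norm_bound[OF hom])
  show "nrm (T x) \<le> sqrt K" if "nrm x = 1" for x
  proof (rule real_le_rsqrt)
    show "nrm (T x) ^ 2 \<le> K"
      using adjoint_norm_sq[OF adj, of x] unit[OF that] that by simp
  qed
  show "nrm (T x) = 0" if "nrm x = 0" for x
    using adjoint_norm_sq[OF adj, of x] that nrm_nonneg[of "T x"] by simp
qed

definition opnorm :: "('a \<Rightarrow> 'a) \<Rightarrow> real" where
  "opnorm X = Sup {nrm (X x) | x. nrm x = 1}"

definition numrad :: "('a \<Rightarrow> 'a) \<Rightarrow> real" where
  "numrad X = Sup {cmod (f (X x) x) | x. nrm x = 1}"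

lemma unit_norm_le_opnorm:
  assumes bound: "\<And>x. nrm (X x) \<le> K * nrm x" and "nrm x = 1"
  shows "nrm (X x) \<le> opnorm X"
  unfolding opnorm_def
proof (rule cSup_upper)
  have "nrm (X x) \<le> K" if "nrm x = 1" for x
    using bound[of x] that by simp
  then show "bdd_above {nrm (X x) | x. nrm x = 1}"
    by (intro bdd_aboveI[of _ K]) auto
qed (use \<open>nrm x = 1\<close> in blast)

lemma norm_le_opnorm:
  assumes hom: "\<And>a x. X (sc a x) = sc a (X x)" and bound: "\<And>x. nrm (X x) \<le> K * nrm x"
  shows "nrm (X x) \<le> opnorm X * nrm x"
proof (rule homogeneous_norm_bound[OF hom])
  show "nrm (X x) = 0" if "nrm x = 0" for x
    using bound[of x] nrm_nonneg[of "X x"] that by simp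
qed (rule unit_norm_le_opnorm[OF bound])

lemma opnorm_nonneg:
  assumes "nrm u = 1" and "\<And>x. nrm (X x) \<le> K * nrm x"
  shows "opnorm X \<ge> 0"
  using unit_norm_le_opnorm[OF assms(2,1)] nrm_nonneg[of "X u"] by linarith

lemma unit_inner_le_numrad:
  assumes bound: "\<And>x. nrm (X x) \<le> K * nrm x" and "nrm x = 1"
  shows "cmod (f (X x) x) \<le> numrad X"
  unfolding numrad_def
proof (rule cSup_upper)
  have "cmod (f (X x) x) \<le> K" if "nrm x = 1" for x
    using cauchy_schwarz[of "X x" x] bound[of x] that by simp
  then show "bdd_above {cmod (f (X x) x) | x. nrm x = 1}"
    by (intro bdd_aboveI[of _ K]) auto
qed (use \<open>nrm x = 1\<close> in blast)

lemma inner_le_numrad: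
  assumes hom: "\<And>a x. X (sc a x) = sc a (X x)" and bound: "\<And>x. nrm (X x) \<le> K * nrm x"
  shows "cmod (f (X x) x) \<le> numrad X * nrm x ^ 2"
proof (rule homogeneous_quadratic_bound[OF hom])
  show "f (X x) x = 0" if "nrm x = 0" for x
    using cauchy_schwarz[of "X x" x] that by simp
qed (rule unit_inner_le_numrad[OF bound])

lemma numrad_nonneg:
  assumes "nrm u = 1" and "\<And>x. nrm (X x) \<le> K * nrm x"
  shows "numrad X \<ge> 0"
  using unit_inner_le_numrad[OF assms(2,1)] norm_ge_zero order_trans by blast

lemma numrad_le:
  assumes "nrm u = 1" and "\<And>x. nrm x = 1 \<Longrightarrow> cmod (f (X x) x) \<le> B"
  shows "numrad X \<le> B"
  unfolding numrad_def using assms by (intro cSup_least) auto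

lemma inner_comp_le:
  assumes "nrm x = 1"
    and adj: "\<And>x y. f (S x) y = f x (S' y)"
    and T_le: "\<And>v. nrm (T v) \<le> a * nrm v" and S'_le: "\<And>v. nrm (S' v) \<le> b * nrm v"
    and ST_le: "\<And>v. cmod (f (S (T v)) v) \<le> w * nrm v ^ 2"
    and "a \<ge> 0" "b \<ge> 0" "w \<ge> 0"
  shows "cmod (f (T (S x)) x) \<le> (w + a * b) / 2"
proof -
  define v where "v = S x"
  show ?thesis
  proof (cases "nrm v = 0")
    case True
    then have "nrm (T v) = 0"
      using T_le[of v] nrm_nonneg[of "T v"] by simp
    then show ?thesis
      using cauchy_schwarz[of "T v" x] \<open>a \<ge> 0\<close> \<open>b \<ge> 0\<close> \<open>w \<ge> 0\<close> by (simp add: v_def)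
  next
    case False
    then have "nrm v > 0"
      using nrm_nonneg[of v] by linarith
    have "f x (S' v) = f v v"
      by (simp add: adj v_def)
    also have "\<dots> = complex_of_real (nrm v ^ 2)"
      by (rule diag_eq_nrm_sq)
    finally have "f x (S' v) = complex_of_real (nrm v ^ 2)" .
    moreover have "f (T v) (S' v) = f (S (T v)) v"
      by (simp add: adj)
    ultimately have "cmod (f (T v) x) * nrm v ^ 2 \<le> (nrm (T v) * nrm (S' v) + cmod (f (S (T v)) v)) / 2"
      using buzano[OF \<open>nrm x = 1\<close>, of "T v" "S' v"] by (simp add: norm_mult norm_power)
    also have "\<dots> \<le> ((a * nrm v) * (b * nrm v) + w * nrm v ^ 2) / 2"
      using T_le S'_le ST_le \<open>a \<ge> 0\<close>
      by (intro divide_right_mono add_mono mult_mono) (simp_all add: Re_diag_nonneg)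
    also have "\<dots> = (w + a * b) / 2 * nrm v ^ 2"
      by (simp add: algebra_simps power2_eq_square)
    finally show ?thesis
      using \<open>nrm v > 0\<close> by (simp add: v_def)
  qed
qed

theorem numrad_comp_le:
  assumes "nrm u = 1"
    and hom_T: "\<And>a x. T (sc a x) = sc a (T x)" and bound_T: "\<And>x. nrm (T x) \<le> K * nrm x"
    and hom_S: "\<And>a x. S (sc a x) = sc a (S x)" and bound_S: "\<And>x. nrm (S x) \<le> L * nrm x"
    and adj_S: "\<And>x y. f (S x) y = f x (S' y)"
  shows "numrad (T \<circ> S) \<le> (1/2) * (numrad (S \<circ> T) + opnorm T * opnorm S)"
proof -
  have T_le: "nrm (T x) \<le> opnorm T * nrm x" for x
    using norm_le_opnorm[OF hom_T bound_T] .
  have S_le: "nrm (S x) \<le> opnorm S * nrm x" for x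
    using norm_le_opnorm[OF hom_S bound_S] .
  have "opnorm T \<ge> 0" "opnorm S \<ge> 0"
    using opnorm_nonneg \<open>nrm u = 1\<close> bound_T bound_S by blast+
  have ST_le: "nrm ((S \<circ> T) x) \<le> (opnorm S * opnorm T) * nrm x" for x
    using order_trans[OF S_le mult_left_mono[OF T_le \<open>opnorm S \<ge> 0\<close>]] by (simp add: mult.assoc)
  have ST_hom: "(S \<circ> T) (sc a x) = sc a ((S \<circ> T) x)" for a x
    by (simp add: hom_S hom_T)
  show ?thesis
  proof (rule numrad_le[OF \<open>nrm u = 1\<close>])
    fix x assume "nrm x = 1"
    then show "cmod (f ((T \<circ> S) x) x) \<le> (1/2) * (numrad (S \<circ> T) + opnorm T * opnorm S)"
      using inner_comp_le[OF _ adj_S T_le adjoint_norm_le[OF adj_S S_le \<open>opnorm S \<ge> 0\<close>]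
          inner_le_numrad[OF ST_hom ST_le, unfolded o_apply]]
        \<open>opnorm T \<ge> 0\<close> \<open>opnorm S \<ge> 0\<close> numrad_nonneg[OF \<open>nrm u = 1\<close> ST_le]
      by (simp add: comp_def)
  qed
qed

end

lemma sesquilinear_hermitian_if_real_diagonal:
  fixes sc :: "complex \<Rightarrow> 'a::ab_group_add \<Rightarrow> 'a" and g :: "'a \<Rightarrow> 'a \<Rightarrow> complex"
  assumes add: "\<And>u v w. g (u + v) w = g u w + g v w" "\<And>u v w. g w (u + v) = g w u + g w v"
    and scale: "\<And>a u w. g (sc a u) w = a * g u w" "\<And>a u w. g w (sc a u) = cnj a * g w u"
    and real: "\<And>z. Im (g z z) = 0"
  shows "g y x = cnj (g x y)"
proof -
  have conj_diag: "cnj (g z z) = g z z" for z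
    using real[of z] by (simp add: complex_eq_iff)
  have "g (x + y) (x + y) = g x x + g x y + g y x + g y y"
    by (simp add: add)
  then have re: "cnj (g x y) + cnj (g y x) = g x y + g y x"
    using conj_diag[of "x + y"] conj_diag[of x] conj_diag[of y] by (simp add: algebra_simps)
  have "g (x + sc \<i> y) (x + sc \<i> y) = g x x - \<i> * g x y + \<i> * g y x + g y y"
    by (simp add: add scale algebra_simps)
  then have "cnj (g x x - \<i> * g x y + \<i> * g y x + g y y) = g x x - \<i> * g x y + \<i> * g y x + g y y"
    using conj_diag[of "x + sc \<i> y"] by simp
  then have "\<i> * (cnj (g x y) - cnj (g y x)) = \<i> * (g y x - g x y)"
    using conj_diag[of x] conj_diag[of y] by (simp add: algebra_simps)
  then have im: "cnj (g x y) - cnj (g y x) = g y x - g x y"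
    by simp
  have "2 * cnj (g x y) = 2 * g y x"
    using arg_cong2[OF re im, of "(+)"] by (simp add: algebra_simps)
  then show ?thesis
    by simp
qed

lemma complex_hilbert_space_semi_inner_product:
  assumes "complex_hilbert_space sc ip"
  shows "semi_inner_product sc ip"
proof -
  have "(\<forall>x y z. ip (x + y) z = ip x z + ip y z) \<and> (\<forall>a x y. ip (sc a x) y = a * ip x y) \<and>
      (\<forall>x y. ip y x = cnj (ip x y)) \<and> (\<forall>x. Im (ip x x) = 0 \<and> Re (ip x x) \<ge> 0)"
    using assms unfolding complex_hilbert_space_def by (elim conjE) (intro conjI; assumption)
  then show ?thesis
    by unfold_locales blast+
qed

lemma complex_hilbert_space_definite:
  assumes "complex_hilbert_space sc ip" and "ip x x = 0"
  shows "x = 0"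
proof -
  have "\<forall>x. ip x x = 0 \<longrightarrow> x = 0"
    using assms(1) unfolding complex_hilbert_space_def by (elim conjE) assumption
  with assms(2) show ?thesis
    by blast
qed

locale positive_operator =
  fixes sc :: "complex \<Rightarrow> 'a::ab_group_add \<Rightarrow> 'a" and ip :: "'a \<Rightarrow> 'a \<Rightarrow> complex" and A :: "'a \<Rightarrow> 'a"
  assumes hilbert: "complex_hilbert_space sc ip" and positive: "positive_op sc ip A"
begin

sublocale H: semi_inner_product sc ip
  by (rule complex_hilbert_space_semi_inner_product[OF hilbert])

lemma bounded_opE:
  assumes "bounded_op sc ip T"
  obtains C where "C \<ge> 0" "\<And>x. H.nrm (T x) \<le> C * H.nrm x"
proof -
  obtain C where C: "\<And>x. H.nrm (T x) \<le> C * H.nrm x"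
    using assms unfolding bounded_op_def hnorm_def by blast
  show thesis
  proof (rule that)
    show "H.nrm (T x) \<le> max C 0 * H.nrm x" for x
      by (rule order_trans[OF C mult_right_mono]) (simp_all add: H.Re_diag_nonneg)
  qed simp
qed

lemma A_add: "A (x + y) = A x + A y" and A_scale: "A (sc a x) = sc a (A x)"
  using positive unfolding positive_op_def bounded_op_def by auto

sublocale HA: semi_inner_product sc "A_ip ip A"
proof unfold_locales
  have hermitian: "ip (A y) x = cnj (ip (A x) y)" for x y
  proof (rule sesquilinear_hermitian_if_real_diagonal[of "\<lambda>x y. ip (A x) y" sc])
    show "Im (ip (A z) z) = 0" for z
      using positive by (simp add: positive_op_def)
  qed (simp_all add: A_add A_scale H.add_left H.add_right H.scale_left H.scale_right)
  show "A_ip ip A y x = cnj (A_ip ip A x y)" for x y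
    unfolding A_ip_def by (rule hermitian)
  show "Im (A_ip ip A x x) = 0" "Re (A_ip ip A x x) \<ge> 0" for x
    using positive by (simp_all add: A_ip_def positive_op_def)
qed (simp_all add: A_ip_def A_add A_scale H.add_left H.scale_left)

lemma A_opnorm_eq: "A_opnorm ip A X = HA.opnorm X"
  by (simp add: A_opnorm_def HA.opnorm_def A_norm_def A_ip_def)

lemma A_numrad_eq: "A_numrad ip A X = HA.numrad X"
  by (simp add: A_numrad_def HA.numrad_def A_norm_def A_ip_def)

lemma A_seminorm_le_norm:
  obtains c where "c \<ge> 0" "\<And>z. HA.nrm z \<le> c * H.nrm z"
proof -
  obtain C where "C \<ge> 0" and C: "\<And>x. H.nrm (A x) \<le> C * H.nrm x"
    using bounded_opE positive unfolding positive_op_def by blast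
  have "HA.nrm z \<le> sqrt C * H.nrm z" for z
  proof -
    have "Re (ip (A z) z) \<le> H.nrm (A z) * H.nrm z"
      using complex_Re_le_cmod H.cauchy_schwarz order_trans by blast
    also have "\<dots> \<le> C * (H.nrm z * H.nrm z)"
      using mult_right_mono[OF C H.nrm_nonneg] by (simp only: mult.assoc)
    finally have "HA.nrm z \<le> sqrt (C * (H.nrm z * H.nrm z))"
      unfolding A_ip_def by (rule real_sqrt_le_mono)
    then show ?thesis
      using H.nrm_nonneg[of z] by (simp only: real_sqrt_mult[of C] real_sqrt_abs2 abs_of_nonneg)
  qed
  with \<open>C \<ge> 0\<close> show thesis
    using that[of "sqrt C"] by simp
qed

text \<open>Membership in \<open>\<B>\<^sub>A(\<H>)\<close> only asks for boundedness in the norm of \<open>\<H>\<close>.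
  Boundedness in the seminorm comes from a spectral-radius argument: \<open>T' \<circ> T\<close> is
  \<open>A\<close>-selfadjoint, its powers grow at most geometrically in the norm of \<open>\<H>\<close>, which dominates
  the seminorm, and \<open>\<parallel>T x\<parallel>\<^sub>A\<^sup>2 \<le> \<parallel>x\<parallel>\<^sub>A \<parallel>T' (T x)\<parallel>\<^sub>A\<close>.\<close>
lemma BA_seminorm_bounded:
  assumes "T \<in> BA sc ip A"
  obtains K where "\<And>x. HA.nrm (T x) \<le> K * HA.nrm x"
proof -
  obtain T' where "bounded_op sc ip T" "bounded_op sc ip T'"
    and adj: "\<And>x y. A_ip ip A (T x) y = A_ip ip A x (T' y)"
    using assms unfolding BA_def by blast
  then obtain C1 C2 where "C1 \<ge> 0" "C2 \<ge> 0"
    and C1: "\<And>x. H.nrm (T x) \<le> C1 * H.nrm x" and C2: "\<And>x. H.nrm (T' x) \<le> C2 * H.nrm x"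
    using bounded_opE by metis
  obtain c where "c \<ge> 0" and c: "\<And>z. HA.nrm z \<le> c * H.nrm z"
    using A_seminorm_le_norm by blast
  define K where "K = C2 * C1 + 1"
  have "K > 0"
    using \<open>C1 \<ge> 0\<close> \<open>C2 \<ge> 0\<close> by (simp add: K_def add_nonneg_pos)
  have R_le: "H.nrm ((T' \<circ> T) x) \<le> K * H.nrm x" for x
  proof -
    have "H.nrm (T' (T x)) \<le> C2 * (C1 * H.nrm x)"
      using order_trans[OF C2 mult_left_mono[OF C1 \<open>C2 \<ge> 0\<close>]] .
    also have "\<dots> \<le> K * H.nrm x"
      by (simp add: K_def mult.assoc[symmetric] distrib_right H.Re_diag_nonneg)
    finally show ?thesis
      by simp
  qed
  have growth: "HA.nrm (((T' \<circ> T) ^^ m) x) \<le> (c * H.nrm x) * K ^ m" for m x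
    using order_trans[OF c mult_left_mono[OF H.funpow_norm_le[OF R_le] \<open>c \<ge> 0\<close>]] \<open>K > 0\<close>
    by (simp only: mult_ac less_imp_le)
  have "HA.nrm (T x) \<le> sqrt K * HA.nrm x" for x
  proof (rule HA.norm_le_sqrt_adjoint_comp_bound[OF _ adj])
    show "T (sc a x) = sc a (T x)" for a x
      using \<open>bounded_op sc ip T\<close> unfolding bounded_op_def by blast
    show "HA.nrm (T' (T x)) \<le> K" if "HA.nrm x = 1" for x
      using HA.selfadjoint_norm_le_growth_rate[OF HA.adjoint_comp_selfadjoint[OF adj] that \<open>K > 0\<close> growth]
      by simp
  qed
  then show thesis
    by (rule that)
qed

lemma exists_seminorm_unit:
  assumes "A x \<noteq> 0"
  obtains u where "HA.nrm u = 1"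
proof -
  have "HA.nrm x \<noteq> 0"
  proof
    assume "HA.nrm x = 0"
    then have "A_ip ip A x (A x) = 0"
      using HA.cauchy_schwarz[of x "A x"] by simp
    then have "ip (A x) (A x) = 0"
      by (simp add: A_ip_def)
    with assms show False
      using complex_hilbert_space_definite[OF hilbert] by blast
  qed
  then show thesis
    using HA.nrm_normalize that by blast
qed

end

theorem corollary2p8:
  fixes sc :: "complex \<Rightarrow> 'a::ab_group_add \<Rightarrow> 'a"
    and ip :: "'a \<Rightarrow> 'a \<Rightarrow> complex"
    and A T S :: "'a \<Rightarrow> 'a"
  assumes "complex_hilbert_space sc ip"
    and "positive_op sc ip A"
    and "\<exists>x. A x \<noteq> 0"
    and "T \<in> BA sc ip A"
    and "S \<in> BA sc ip A"
  shows "A_numrad ip A (T \<circ> S)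
           \<le> (1/2) * (A_numrad ip A (S \<circ> T) + A_opnorm ip A T * A_opnorm ip A S)"
proof -
  interpret positive_operator sc ip A
    using assms(1,2) by unfold_locales
  obtain u where "HA.nrm u = 1"
    using assms(3) exists_seminorm_unit by blast
  obtain K L where "\<And>x. HA.nrm (T x) \<le> K * HA.nrm x" "\<And>x. HA.nrm (S x) \<le> L * HA.nrm x"
    using BA_seminorm_bounded assms(4,5) by metis
  moreover obtain S' where "\<And>x y. A_ip ip A (S x) y = A_ip ip A x (S' y)"
    using assms(5) unfolding BA_def by blast
  moreover have "T (sc a x) = sc a (T x)" "S (sc a x) = sc a (S x)" for a x
    using assms(4,5) by (simp_all add: BA_def bounded_op_def)
  ultimately show ?thesis
    unfolding A_numrad_eq A_opnorm_eq using HA.numrad_comp_le \<open>HA.nrm u = 1\<close> by blast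
qed

end
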